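(* Let $\kappa$ be a cardinal, $W_1,W_2\subseteq C^\omega$ objectives, and $(U_1,\le_1)$, $(U_2,\le_2)$ partially ordered $C$-graphs which are $(\kappa,W_1)$-universal and $(\kappa,W_2)$-universal respectively. Then their direct product $U$ is $(\kappa,W_1\cap W_2)$-universal.
   Context: A $C$-graph: vertex set $V(G)$, edges $E(G)\subseteq V(G)\times C\times V(G)$ written $v\xrightarrow{c}v'$, every vertex having an outgoing edge; a $C$-tree is a $C$-graph with root $t_0$ such that every vertex has a unique path from $t_0$. A morphism maps vertices so edges go to edges of the same colour. A vertex satisfies an objective $W$ if every infinite path from it has colour sequence in $W$. $G$ is $(\kappa,W)$-universal if every $C$-tree $T$ of cardinality $<\kappa$ with root $t_0$ admits a morphism $\phi:T\to G$ such that $\phi(t_0)$ satisfies $W$ in $G$ whenever $t_0$ satisfies $W$ in $T$. The direct product of $(U_1,\le_1)$ and $(U_2,\le_2)$ is the $C$-graph on $V(U_1)\times V(U_2)$ ordered coordinatewise, with an edge $(v_1,v_2)\xrightarrow{c}(v_1',v_2')$ iff $v_1\xrightarrow{c}v_1'\in E(U_1)$ and $v_2\xrightarrow{c}v_2'\in E(U_2)$. *)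

theory Defs
  imports Main
begin

definition is_cgraph :: "'v set \<Rightarrow> ('v \<times> 'c \<times> 'v) set \<Rightarrow> bool" where
  "is_cgraph V E \<longleftrightarrow> E \<subseteq> V \<times> UNIV \<times> V \<and> (\<forall>v\<in>V. \<exists>c v'. (v, c, v') \<in> E)"

inductive fpath :: "('v \<times> 'c \<times> 'v) set \<Rightarrow> 'v \<Rightarrow> ('v \<times> 'c \<times> 'v) list \<Rightarrow> 'v \<Rightarrow> bool"
  for E where
  fpath_Nil: "fpath E u [] u"
| fpath_Cons: "(u, c, w) \<in> E \<Longrightarrow> fpath E w es v \<Longrightarrow> fpath E u ((u, c, w) # es) v"

definition is_ctree :: "'v set \<Rightarrow> ('v \<times> 'c \<times> 'v) set \<Rightarrow> 'v \<Rightarrow> bool" where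
  "is_ctree V E r \<longleftrightarrow> is_cgraph V E \<and> r \<in> V \<and> (\<forall>v\<in>V. \<exists>!es. fpath E r es v)"

definition is_morphism ::
  "'v set \<Rightarrow> ('v \<times> 'c \<times> 'v) set \<Rightarrow> 'w set \<Rightarrow> ('w \<times> 'c \<times> 'w) set \<Rightarrow> ('v \<Rightarrow> 'w) \<Rightarrow> bool" where
  "is_morphism V E V' E' \<phi> \<longleftrightarrow>
     (\<forall>v\<in>V. \<phi> v \<in> V') \<and> (\<forall>u c w. (u, c, w) \<in> E \<longrightarrow> (\<phi> u, c, \<phi> w) \<in> E')"

definition inf_path :: "('v \<times> 'c \<times> 'v) set \<Rightarrow> 'v \<Rightarrow> (nat \<Rightarrow> 'v) \<Rightarrow> (nat \<Rightarrow> 'c) \<Rightarrow> bool" where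
  "inf_path E v p col \<longleftrightarrow> p 0 = v \<and> (\<forall>i. (p i, col i, p (Suc i)) \<in> E)"

definition satisfies :: "('v \<times> 'c \<times> 'v) set \<Rightarrow> (nat \<Rightarrow> 'c) set \<Rightarrow> 'v \<Rightarrow> bool" where
  "satisfies E W v \<longleftrightarrow> (\<forall>p col. inf_path E v p col \<longrightarrow> col \<in> W)"

text \<open>(kappa, W)-universality, where trees range over all C-trees whose vertices
  live in the type 't (a parameter; the theorem is stated for every such type).\<close>
definition universal ::
  "'t itself \<Rightarrow> 'k rel \<Rightarrow> (nat \<Rightarrow> 'c) set \<Rightarrow> 'v set \<Rightarrow> ('v \<times> 'c \<times> 'v) set \<Rightarrow> bool" where
  "universal _ \<kappa> W V E \<longleftrightarrow>
     (\<forall>(T :: 't set) (ET :: ('t \<times> 'c \<times> 't) set) t0.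
        is_ctree T ET t0 \<and> ordLess2 (card_of T) \<kappa> \<longrightarrow>
        (\<exists>\<phi>. is_morphism T ET V E \<phi> \<and> (satisfies ET W t0 \<longrightarrow> satisfies E W (\<phi> t0))))"

definition prod_vertices :: "'a set \<Rightarrow> 'b set \<Rightarrow> ('a \<times> 'b) set" where
  "prod_vertices V1 V2 = V1 \<times> V2"

definition prod_edges ::
  "('a \<times> 'c \<times> 'a) set \<Rightarrow> ('b \<times> 'c \<times> 'b) set \<Rightarrow> (('a \<times> 'b) \<times> 'c \<times> ('a \<times> 'b)) set" where
  "prod_edges E1 E2 = {((v1, v2), c, (w1, w2)) | v1 v2 c w1 w2.
      (v1, c, w1) \<in> E1 \<and> (v2, c, w2) \<in> E2}"

definition prod_order :: "'a rel \<Rightarrow> 'b rel \<Rightarrow> ('a \<times> 'b) rel" where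
  "prod_order r1 r2 = {((a1, b1), (a2, b2)) | a1 b1 a2 b2. (a1, a2) \<in> r1 \<and> (b1, b2) \<in> r2}"

end

theory Submission
  imports Defs
begin

text \<open>Given morphisms \<open>f\<^sub>1\<close>, \<open>f\<^sub>2\<close> of a tree into \<open>U\<^sub>1\<close> and \<open>U\<^sub>2\<close>, the pairing
  \<open>t \<mapsto> (f\<^sub>1 t, f\<^sub>2 t)\<close> is a morphism into the product. An infinite path in the
  product projects to infinite paths with the same colours in both factors, so if
  \<open>f\<^sub>i t\<^sub>0\<close> satisfies \<open>W\<^sub>i\<close> for both \<open>i\<close>, the pair satisfies \<open>W\<^sub>1 \<inter> W\<^sub>2\<close>.\<close>

lemma satisfies_mono:
  assumes "W \<subseteq> W'" and "satisfies E W v"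
  shows "satisfies E W' v"
  using assms unfolding satisfies_def by blast

lemma inf_path_prod_edges_iff:
  "inf_path (prod_edges E1 E2) (v1, v2) p col \<longleftrightarrow>
     inf_path E1 v1 (fst \<circ> p) col \<and> inf_path E2 v2 (snd \<circ> p) col"
  unfolding inf_path_def prod_edges_def by (auto simp: prod_eq_iff)

lemma satisfies_prod_edges:
  assumes "satisfies E1 W1 v1" and "satisfies E2 W2 v2"
  shows "satisfies (prod_edges E1 E2) (W1 \<inter> W2) (v1, v2)"
  using assms unfolding satisfies_def inf_path_prod_edges_iff by blast

lemma is_morphism_pair:
  assumes "is_morphism V E V1 E1 f1" and "is_morphism V E V2 E2 f2"
  shows "is_morphism V E (prod_vertices V1 V2) (prod_edges E1 E2) (\<lambda>v. (f1 v, f2 v))"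
  using assms unfolding is_morphism_def prod_vertices_def prod_edges_def by auto

lemma universal_prod:
  fixes E1 :: "('a \<times> 'c \<times> 'a) set" and E2 :: "('b \<times> 'c \<times> 'b) set"
  assumes "universal TYPE('t) \<kappa> W1 V1 E1" and "universal TYPE('t) \<kappa> W2 V2 E2"
  shows "universal TYPE('t) \<kappa> (W1 \<inter> W2) (prod_vertices V1 V2) (prod_edges E1 E2)"
  unfolding universal_def
proof (intro allI impI)
  fix T :: "'t set" and ET :: "('t \<times> 'c \<times> 't) set" and t0
  assume small_tree: "is_ctree T ET t0 \<and> ordLess2 (card_of T) \<kappa>"
  obtain f1 where f1: "is_morphism T ET V1 E1 f1"
    and sat1: "satisfies ET W1 t0 \<Longrightarrow> satisfies E1 W1 (f1 t0)"
    using assms(1) small_tree unfolding universal_def by blast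
  obtain f2 where f2: "is_morphism T ET V2 E2 f2"
    and sat2: "satisfies ET W2 t0 \<Longrightarrow> satisfies E2 W2 (f2 t0)"
    using assms(2) small_tree unfolding universal_def by blast
  have "satisfies (prod_edges E1 E2) (W1 \<inter> W2) (f1 t0, f2 t0)"
    if "satisfies ET (W1 \<inter> W2) t0"
    using that by (intro satisfies_prod_edges sat1 sat2) (auto elim: satisfies_mono[rotated])
  with is_morphism_pair[OF f1 f2]
  show "\<exists>\<phi>. is_morphism T ET (prod_vertices V1 V2) (prod_edges E1 E2) \<phi> \<and>
      (satisfies ET (W1 \<inter> W2) t0 \<longrightarrow> satisfies (prod_edges E1 E2) (W1 \<inter> W2) (\<phi> t0))"
    by blast
qed

theorem lemma6p6:
  fixes \<kappa> :: "'k rel"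
    and W1 W2 :: "(nat \<Rightarrow> 'c) set"
    and V1 :: "'a set" and E1 :: "('a \<times> 'c \<times> 'a) set" and le1 :: "'a rel"
    and V2 :: "'b set" and E2 :: "('b \<times> 'c \<times> 'b) set" and le2 :: "'b rel"
  assumes "Card_order \<kappa>"
    and "is_cgraph V1 E1" and "partial_order_on V1 le1"
    and "is_cgraph V2 E2" and "partial_order_on V2 le2"
    and "universal TYPE('t) \<kappa> W1 V1 E1"
    and "universal TYPE('t) \<kappa> W2 V2 E2"
  shows "universal TYPE('t) \<kappa> (W1 \<inter> W2) (prod_vertices V1 V2) (prod_edges E1 E2)"
  using assms(6,7) by (rule universal_prod)

end
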